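(* A function $f\colon\prod_{i\in[n]}X_i\to Y$ is a pseudo-polynomial function if and only if it is pseudo-median decomposable.
   Context: $Y$ is a finite distributive lattice with least element $0$ and greatest element $1$. $[n]=\{1,\ldots,n\}$. $X_1,\ldots,X_n$ are arbitrary sets with at least two elements; in each $X_k$ two distinct elements $0_{X_k},1_{X_k}$ (written $0,1$) are fixed. A map $\varphi_k\colon X_k\to Y$ satisfies the boundary condition if $\varphi_k(0_{X_k})\le\varphi_k(x_k)\le\varphi_k(1_{X_k})$ for all $x_k\in X_k$. A polynomial function $p\colon Y^n\to Y$ is a function obtained by composing the lattice operations $\wedge,\vee$ with variables and constants of $Y$. $f$ is a pseudo-polynomial function if there exist a polynomial function $p\colon Y^n\to Y$ and maps $\varphi_k\colon X_k\to Y$ satisfying the boundary condition with $f(\mathbf{x})=p(\varphi_1(x_1),\ldots,\varphi_n(x_n))$ for all $\mathbf{x}$. For $\mathbf{x}$ and $a\in X_k$, $\mathbf{x}_k^a$ is $\mathbf{x}$ with its $k$-th component replaced by $a$. $\operatorname{med}(y_1,y_2,y_3)=(y_1\wedge y_2)\vee(y_2\wedge y_3)\vee(y_3\wedge y_1)$. $f$ is pseudo-median decomposable if for each $k\in[n]$ there is a map $\varphi_k\colon X_k\to Y$ satisfying the boundary condition such that $f(\mathbf{x})=\operatorname{med}\big(f(\mathbf{x}_k^0),\varphi_k(x_k),f(\mathbf{x}_k^1)\big)$ for every $\mathbf{x}\in\prod_{i\in[n]}X_i$. *)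

theory Defs
  imports Main "HOL-Library.FuncSet"
begin

text \<open>Lattice polynomial functions Y^n -> Y (n-tuples modelled as functions nat => Y,
  only coordinates 1..n used): the smallest class containing the projections onto
  coordinates 1..n and the constants, closed under pointwise meet and join.\<close>
inductive polynomial_function :: "nat \<Rightarrow> ((nat \<Rightarrow> 'y::lattice) \<Rightarrow> 'y) \<Rightarrow> bool"
  for n :: nat where
  proj: "k \<in> {1..n} \<Longrightarrow> polynomial_function n (\<lambda>y. y k)"
| const: "polynomial_function n (\<lambda>y. c)"
| meet: "polynomial_function n p \<Longrightarrow> polynomial_function n q \<Longrightarrow>
         polynomial_function n (\<lambda>y. inf (p y) (q y))"
| join: "polynomial_function n p \<Longrightarrow> polynomial_function n q \<Longrightarrow>
         polynomial_function n (\<lambda>y. sup (p y) (q y))"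

definition med :: "'y::lattice \<Rightarrow> 'y \<Rightarrow> 'y \<Rightarrow> 'y" where
  "med a b c = sup (sup (inf a b) (inf b c)) (inf c a)"

definition boundary_cond :: "'x set \<Rightarrow> 'x \<Rightarrow> 'x \<Rightarrow> ('x \<Rightarrow> 'y::order) \<Rightarrow> bool" where
  "boundary_cond Xk zk ok \<phi> \<longleftrightarrow> (\<forall>a\<in>Xk. \<phi> zk \<le> \<phi> a \<and> \<phi> a \<le> \<phi> ok)"

definition pseudo_polynomial ::
  "nat \<Rightarrow> (nat \<Rightarrow> 'x set) \<Rightarrow> (nat \<Rightarrow> 'x) \<Rightarrow> (nat \<Rightarrow> 'x) \<Rightarrow> ((nat \<Rightarrow> 'x) \<Rightarrow> 'y::lattice) \<Rightarrow> bool" where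
  "pseudo_polynomial n X z u f \<longleftrightarrow>
     (\<exists>p \<phi>. polynomial_function n p \<and>
        (\<forall>k\<in>{1..n}. boundary_cond (X k) (z k) (u k) (\<phi> k)) \<and>
        (\<forall>x\<in>PiE {1..n} X. f x = p (\<lambda>i. \<phi> i (x i))))"

definition pseudo_median_decomposable ::
  "nat \<Rightarrow> (nat \<Rightarrow> 'x set) \<Rightarrow> (nat \<Rightarrow> 'x) \<Rightarrow> (nat \<Rightarrow> 'x) \<Rightarrow> ((nat \<Rightarrow> 'x) \<Rightarrow> 'y::lattice) \<Rightarrow> bool" where
  "pseudo_median_decomposable n X z u f \<longleftrightarrow>
     (\<forall>k\<in>{1..n}. \<exists>\<phi>k. boundary_cond (X k) (z k) (u k) \<phi>k \<and>
        (\<forall>x\<in>PiE {1..n} X. f x = med (f (x(k := z k))) (\<phi>k (x k)) (f (x(k := u k)))))"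

end

theory Submission
  imports Defs
begin

(* In a distributive lattice, med A t B = A \<squnion> (t \<sqinter> B) whenever A \<le> B.
   (1) Every lattice polynomial p is "affine" in each variable k:
       p(y[k:=t]) = p(y[k:=\<bottom>]) \<squnion> (t \<sqinter> p(y[k:=\<top>])), with p(y[k:=\<bottom>]) \<le> p(y[k:=\<top>]);
       this is proved by induction over polynomial functions.  Substituting
       t = \<phi>_k(x_k), \<phi>_k(0), \<phi>_k(1) and using the boundary condition turns this into
       the median decomposition of a pseudo-polynomial function.
   (2) Conversely, the median decomposition in variable k, together with the boundary
       condition, gives f(x) = f(x[k:=0]) \<squnion> (\<phi>_k(x_k) \<sqinter> f(x[k:=1])).  Applying this
       successively to the variables n, n-1, ..., 1 expands f into an explicit lattice
       polynomial (median_expansion) in the values \<phi>_i(x_i), whose constants are the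
       values of f at the corners of the box {0,1}^n. *)

lemma med_ordered:
  fixes A B t :: "'y::distrib_lattice"
  assumes "A \<le> B"
  shows "med A t B = sup A (inf t B)"
proof -
  have "inf B A = A" using assms by (simp add: inf_absorb2)
  moreover have "sup (inf A t) A = A" by (simp add: sup_absorb2)
  ultimately show ?thesis unfolding med_def by (metis sup_assoc sup_commute)
qed

text \<open>The median is monotone in its middle argument; this forces f(x[k:=0]) \<le> f(x[k:=1])
  for a median decomposable f.\<close>
lemma med_mono_middle:
  fixes A B a b :: "'y::distrib_lattice"
  assumes "a \<le> b"
  shows "med A a B \<le> med A b B"
  unfolding med_def using assms
  by (meson inf_mono order.refl sup_mono)

lemma med_affine:
  fixes A B a b t :: "'y::distrib_lattice"
  assumes "A \<le> B" "a \<le> t" "t \<le> b"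
  shows "med (sup A (inf a B)) t (sup A (inf b B)) = sup A (inf t B)"
proof -
  have "sup A (inf a B) \<le> sup A (inf b B)"
    using assms by (meson inf_mono order.trans order.refl sup_mono)
  then have "med (sup A (inf a B)) t (sup A (inf b B))
           = sup (sup A (inf a B)) (inf t (sup A (inf b B)))"
    by (rule med_ordered)
  also have "\<dots> = sup (sup A (inf a B)) (sup (inf t A) (inf t B))"
    using assms(3) by (simp add: inf_sup_distrib1 inf_absorb1 flip: inf_assoc)
  also have "\<dots> = sup A (inf t B)"
  proof -
    have "inf a B \<le> inf t B" "inf t A \<le> A" using assms(2) by (auto intro: le_infI1)
    then show ?thesis by (metis sup.absorb_iff1 sup_assoc sup_commute sup_left_commute)
  qed
  finally show ?thesis .
qed

lemma affine_inf:
  fixes A1 B1 A2 B2 t :: "'y::distrib_lattice"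
  assumes "A1 \<le> B1" "A2 \<le> B2"
  shows "inf (sup A1 (inf t B1)) (sup A2 (inf t B2)) = sup (inf A1 A2) (inf t (inf B1 B2))"
proof -
  have "inf (sup A1 (inf t B1)) (sup A2 (inf t B2))
      = sup (sup (inf A1 A2) (inf (inf t B1) A2)) (sup (inf A1 (inf t B2)) (inf t (inf B1 B2)))"
    by (simp add: inf_sup_distrib1 inf_sup_distrib2 inf_assoc inf_left_commute inf_commute sup_assoc)
  also have "\<dots> = sup (inf A1 A2) (inf t (inf B1 B2))"
  proof -
    have "inf (inf t B1) A2 \<le> inf t (inf B1 B2)" "inf A1 (inf t B2) \<le> inf t (inf B1 B2)"
      using assms by (auto intro: le_infI1 le_infI2)
    then show ?thesis by (metis sup.absorb_iff1 sup_assoc sup_commute sup_left_commute)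
  qed
  finally show ?thesis .
qed

lemma affine_sup:
  fixes A1 B1 A2 B2 t :: "'y::distrib_lattice"
  shows "sup (sup A1 (inf t B1)) (sup A2 (inf t B2)) = sup (sup A1 A2) (inf t (sup B1 B2))"
  by (simp add: inf_sup_distrib1 sup.assoc sup.left_commute)

lemma polynomial_function_affine:
  fixes p :: "(nat \<Rightarrow> 'y::{distrib_lattice, bounded_lattice}) \<Rightarrow> 'y"
  assumes "polynomial_function n p"
  shows "p (y(k := t)) = sup (p (y(k := bot))) (inf t (p (y(k := top))))
         \<and> p (y(k := bot)) \<le> p (y(k := top))"
  using assms
proof (induction rule: polynomial_function.induct)
  case (proj j)
  then show ?case by (cases "j = k") (auto simp: sup_absorb1)
next
  case (const c)
  then show ?case by (simp add: sup_absorb1)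
next
  case (meet p q)
  then have "p (y(k:=bot)) \<le> p (y(k:=top))" "q (y(k:=bot)) \<le> q (y(k:=top))" by blast+
  then show ?case using meet.IH affine_inf inf_mono by metis
next
  case (join p q)
  then have "p (y(k:=bot)) \<le> p (y(k:=top))" "q (y(k:=bot)) \<le> q (y(k:=top))" by blast+
  then show ?case using join.IH affine_sup sup_mono by metis
qed

lemma fun_upd_in_PiE: "x \<in> PiE I X \<Longrightarrow> k \<in> I \<Longrightarrow> a \<in> X k \<Longrightarrow> x(k := a) \<in> PiE I X"
  by (auto simp: PiE_def extensional_def)

text \<open>The maps \<phi> k of the pseudo-polynomial representation serve as the maps of the
  median decomposition; the affine normal form of p yields the median identity.\<close>
lemma pseudo_polynomial_imp_decomposable:
  fixes f :: "(nat \<Rightarrow> 'x) \<Rightarrow> 'y::{distrib_lattice, bounded_lattice}"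
  assumes corners: "\<forall>k\<in>{1..n}. z k \<in> X k \<and> u k \<in> X k"
    and "pseudo_polynomial n X z u f"
  shows "pseudo_median_decomposable n X z u f"
proof -
  obtain p \<phi> where poly: "polynomial_function n p"
    and bc: "\<forall>k\<in>{1..n}. boundary_cond (X k) (z k) (u k) (\<phi> k)"
    and f_eq: "\<forall>x\<in>PiE {1..n} X. f x = p (\<lambda>i. \<phi> i (x i))"
    using assms(2) unfolding pseudo_polynomial_def by blast
  have "f x = med (f (x(k := z k))) (\<phi> k (x k)) (f (x(k := u k)))"
    if k: "k \<in> {1..n}" and x: "x \<in> PiE {1..n} X" for k x
  proof -
    define y where "y = (\<lambda>i. \<phi> i (x i))"
    have "f (x(k := a)) = p (y(k := \<phi> k a))" if "a \<in> X k" for a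
    proof -
      have "(\<lambda>i. \<phi> i ((x(k := a)) i)) = y(k := \<phi> k a)" by (simp add: y_def fun_eq_iff)
      then show ?thesis using f_eq fun_upd_in_PiE[OF x k that] by simp
    qed
    moreover have "x(k := x k) = x" by simp
    moreover have "\<phi> k (z k) \<le> \<phi> k (x k)" "\<phi> k (x k) \<le> \<phi> k (u k)"
      using bc k PiE_mem[OF x k] unfolding boundary_cond_def by auto
    ultimately show ?thesis
      using corners k x polynomial_function_affine[OF poly, of y k]
        med_affine[of "p (y(k := bot))" "p (y(k := top))" "\<phi> k (z k)" "\<phi> k (x k)" "\<phi> k (u k)"]
      by (metis PiE_mem)
  qed
  then show ?thesis
    using bc unfolding pseudo_median_decomposable_def by blast
qed

lemma decomposition_affine:
  fixes f :: "(nat \<Rightarrow> 'x) \<Rightarrow> 'y::distrib_lattice"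
  assumes bc: "boundary_cond (X k) (z k) (u k) \<phi>"
    and dec: "\<forall>x\<in>PiE {1..n} X. f x = med (f (x(k := z k))) (\<phi> (x k)) (f (x(k := u k)))"
    and k: "k \<in> {1..n}" and corners: "z k \<in> X k" "u k \<in> X k"
    and x: "x \<in> PiE {1..n} X"
  shows "f x = sup (f (x(k := z k))) (inf (\<phi> (x k)) (f (x(k := u k))))"
proof -
  let ?lo = "f (x(k := z k))" and ?hi = "f (x(k := u k))"
  have lo: "?lo = med ?lo (\<phi> (z k)) ?hi"
    using dec fun_upd_in_PiE[OF x k corners(1)] by (metis fun_upd_same fun_upd_upd)
  have hi: "?hi = med ?lo (\<phi> (u k)) ?hi"
    using dec fun_upd_in_PiE[OF x k corners(2)] by (metis fun_upd_same fun_upd_upd)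
  have "\<phi> (z k) \<le> \<phi> (u k)" using bc corners unfolding boundary_cond_def by auto
  then have "?lo \<le> ?hi" using lo hi med_mono_middle by metis
  then show ?thesis using dec x med_ordered by metis
qed

text \<open>The iterated median expansion of f in the variables 1..m: the coordinates 1..m of c
  are replaced by the corners z i, u i, the i-th expansion step being weighted by y i.\<close>
primrec median_expansion ::
  "((nat \<Rightarrow> 'x) \<Rightarrow> 'y::lattice) \<Rightarrow> (nat \<Rightarrow> 'x) \<Rightarrow> (nat \<Rightarrow> 'x) \<Rightarrow> nat \<Rightarrow> (nat \<Rightarrow> 'x) \<Rightarrow> (nat \<Rightarrow> 'y) \<Rightarrow> 'y"
where
  "median_expansion f z u 0 c y = f c"
| "median_expansion f z u (Suc m) c y =
     sup (median_expansion f z u m (c(Suc m := z (Suc m))) y)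
         (inf (y (Suc m)) (median_expansion f z u m (c(Suc m := u (Suc m))) y))"

lemma median_expansion_polynomial:
  "m \<le> n \<Longrightarrow> polynomial_function n (median_expansion f z u m c)"
proof (induction m arbitrary: c)
  case 0
  then show ?case by (simp add: polynomial_function.const)
next
  case (Suc m)
  have "polynomial_function n (\<lambda>y. y (Suc m))"
    using Suc.prems by (intro polynomial_function.proj) simp
  then have "polynomial_function n (\<lambda>y. sup (median_expansion f z u m (c(Suc m := z (Suc m))) y)
                 (inf (y (Suc m)) (median_expansion f z u m (c(Suc m := u (Suc m))) y)))"
    using Suc by (intro polynomial_function.join polynomial_function.meet) simp_all
  then show ?case by simp
qed

lemma median_expansion_cong:
  "(\<forall>i. i \<notin> {1..m} \<longrightarrow> c i = c' i) \<Longrightarrow> median_expansion f z u m c y = median_expansion f z u m c' y"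
proof (induction m arbitrary: c c')
  case 0
  then show ?case by (simp add: fun_eq_iff)
next
  case (Suc m)
  have "median_expansion f z u m (c(Suc m := a)) y = median_expansion f z u m (c'(Suc m := a)) y" for a
    by (rule Suc.IH) (use Suc.prems in auto)
  then show ?case by simp
qed

lemma median_expansion_eq:
  fixes f :: "(nat \<Rightarrow> 'x) \<Rightarrow> 'y::distrib_lattice"
  assumes corners: "\<forall>k\<in>{1..n}. z k \<in> X k \<and> u k \<in> X k"
    and bc: "\<forall>k\<in>{1..n}. boundary_cond (X k) (z k) (u k) (\<phi> k)"
    and dec: "\<forall>k\<in>{1..n}. \<forall>x\<in>PiE {1..n} X. f x = med (f (x(k := z k))) (\<phi> k (x k)) (f (x(k := u k)))"
    and "m \<le> n" and "x \<in> PiE {1..n} X" and "\<forall>i\<in>{1..m}. y i = \<phi> i (x i)"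
  shows "f x = median_expansion f z u m x y"
  using assms(4-6)
proof (induction m arbitrary: x)
  case 0
  then show ?case by simp
next
  case (Suc m)
  let ?k = "Suc m"
  have k: "?k \<in> {1..n}" using Suc.prems(1) by auto
  have "f (x(?k := a)) = median_expansion f z u m (x(?k := a)) y" if "a \<in> X ?k" for a
  proof (rule Suc.IH)
    show "x(?k := a) \<in> PiE {1..n} X" using fun_upd_in_PiE[OF Suc.prems(2) k that] .
    show "\<forall>i\<in>{1..m}. y i = \<phi> i ((x(?k := a)) i)" using Suc.prems(3) by simp
  qed (use Suc.prems(1) in simp)
  then show ?case
    using decomposition_affine[of X ?k z u "\<phi> ?k" n f x] bc dec corners k Suc.prems by auto
qed

text \<open>The full expansion, with all non-box coordinates fixed to z, is the required
  polynomial; the decomposition maps \<phi> k are reused.\<close>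
lemma decomposable_imp_pseudo_polynomial:
  fixes f :: "(nat \<Rightarrow> 'x) \<Rightarrow> 'y::{distrib_lattice, bounded_lattice}"
  assumes corners: "\<forall>k\<in>{1..n}. z k \<in> X k \<and> u k \<in> X k"
    and "pseudo_median_decomposable n X z u f"
  shows "pseudo_polynomial n X z u f"
proof -
  obtain \<phi> where bc: "\<forall>k\<in>{1..n}. boundary_cond (X k) (z k) (u k) (\<phi> k)"
    and dec: "\<forall>k\<in>{1..n}. \<forall>x\<in>PiE {1..n} X. f x = med (f (x(k := z k))) (\<phi> k (x k)) (f (x(k := u k)))"
    using assms(2) unfolding pseudo_median_decomposable_def by metis
  define c0 where "c0 = restrict z {1..n}"
  have "f x = median_expansion f z u n c0 (\<lambda>i. \<phi> i (x i))" if x: "x \<in> PiE {1..n} X" for x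
  proof -
    have "f x = median_expansion f z u n x (\<lambda>i. \<phi> i (x i))"
      using median_expansion_eq[OF corners bc dec order.refl x] by simp
    also have "\<dots> = median_expansion f z u n c0 (\<lambda>i. \<phi> i (x i))"
      by (rule median_expansion_cong) (use x in \<open>auto simp: c0_def PiE_def extensional_def\<close>)
    finally show ?thesis .
  qed
  then show ?thesis
    unfolding pseudo_polynomial_def using bc median_expansion_polynomial[OF order.refl] by blast
qed

theorem mainTheorem2:
  fixes n :: nat
    and X :: "nat \<Rightarrow> 'x set"
    and z u :: "nat \<Rightarrow> 'x"
    and f :: "(nat \<Rightarrow> 'x) \<Rightarrow> 'y::{finite, distrib_lattice, bounded_lattice}"
  assumes "\<forall>k\<in>{1..n}. z k \<in> X k \<and> u k \<in> X k \<and> z k \<noteq> u k"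
  shows "pseudo_polynomial n X z u f \<longleftrightarrow> pseudo_median_decomposable n X z u f"
proof -
  have corners: "\<forall>k\<in>{1..n}. z k \<in> X k \<and> u k \<in> X k" using assms by blast
  show ?thesis
    using pseudo_polynomial_imp_decomposable[OF corners]
      decomposable_imp_pseudo_polynomial[OF corners] by blast
qed

end
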